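(* Let $y(x,\lambda)$ satisfy the Shin-Zettl system $y'(x,\lambda)=F(x,\lambda)y(x,\lambda)$, $F(x,\lambda)=\begin{bmatrix} r_1(x) & p(x)^{-1}\\ q(x)-\lambda\omega(x) & r_2(x)\end{bmatrix}$, on $[0,\ell)$, where $p^{-1},q,r_1,r_2,\omega$ are locally summable. Fix $n\in\mathbb N$, $n\times n$ matrices $A_1,A_2,S(0)$ and $n\times 2$ matrices $\Pi_1(0),\Pi_2(0)$ with $A_1S(0)-S(0)A_2=\Pi_1(0)\Pi_2(0)^*$. Set $Q_1=\begin{bmatrix}0&0\\ \omega&0\end{bmatrix}$, $Q_0=-\begin{bmatrix} r_1 & p^{-1}\\ q & r_2\end{bmatrix}$ and define $\Pi_1,\Pi_2,S$ by $$\Pi_1'=A_1\Pi_1Q_1+\Pi_1Q_0,\quad (\Pi_2^* )'=-Q_1\Pi_2^*A_2-Q_0\Pi_2^*,\quad S'=\Pi_1Q_1\Pi_2^*.$$ Let $w_A(x,\lambda)=I_2-\Pi_2(x)^*S(x)^{-1}(A_1-\lambda I_n)^{-1}\Pi_1(x)$ and $X(x)=\Pi_2(x)^*S(x)^{-1}\Pi_1(x)$ with entries $X_{ik}$. Then, at the points of invertibility of $S(x)$, the function $\widetilde y(x,\lambda)=w_A(x,\lambda)y(x,\lambda)$ satisfies the transformed Shin-Zettl system $\widetilde y'=\widetilde F\widetilde y$ with $$\widetilde F(x,\lambda)=\begin{bmatrix}\widetilde r_1(x) & p(x)^{-1}\\ \widetilde q(x)-\lambda\omega(x) & \widetilde r_2(x)\end{bmatrix},$$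 $$\widetilde r_1=r_1-\omega X_{12},\quad \widetilde r_2=r_2+\omega X_{12},\quad \widetilde q=q+\omega(X_{11}-X_{22}).$$ *)

theory Defs
  imports "HOL-Analysis.Analysis"
begin

definition mat2 :: "'a \<Rightarrow> 'a \<Rightarrow> 'a \<Rightarrow> 'a \<Rightarrow> 'a^2^2" where
  "mat2 a b c d = (\<chi> i j. if i = 1 then (if j = 1 then a else b) else (if j = 1 then c else d))"

definition mat_star :: "complex^'m^'n \<Rightarrow> complex^'n^'m" where
  "mat_star M = (\<chi> i j. cnj (M $ j $ i))"

text \<open>Solution of g' = G in the Caratheodory (absolutely continuous) sense on the
  interval I: G is Lebesgue integrable on every compact subinterval of I and
  g(b) - g(a) is the integral of G over [a,b].\<close>
definition ac_solution_on :: "real set \<Rightarrow> (real \<Rightarrow> 'a::euclidean_space) \<Rightarrow> (real \<Rightarrow> 'a) \<Rightarrow> bool" where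
  "ac_solution_on I g G \<longleftrightarrow>
     (\<forall>a\<in>I. \<forall>b\<in>I. a \<le> b \<longrightarrow>
        G absolutely_integrable_on {a..b} \<and> g b - g a = integral {a..b} G)"

definition locally_summable_on :: "real set \<Rightarrow> (real \<Rightarrow> complex) \<Rightarrow> bool" where
  "locally_summable_on I f \<longleftrightarrow> (\<forall>a\<in>I. \<forall>b\<in>I. a \<le> b \<longrightarrow> f absolutely_integrable_on {a..b})"

end

theory Submission
  imports Defs
begin

text \<open>
  Write \<open>B = S\<^sup>-\<^sup>1\<close>, \<open>R = (A\<^sub>1 - \<lambda>I)\<^sup>-\<^sup>1\<close> and \<open>w\<^sub>A = I - \<Pi>\<^sub>2\<^sup>* B R \<Pi>\<^sub>1\<close>.
  The three linear systems for \<open>\<Pi>\<^sub>1\<close>, \<open>\<Pi>\<^sub>2\<^sup>*\<close> and \<open>S\<close> preserve the identity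
  \<open>A\<^sub>1 S - S A\<^sub>2 = \<Pi>\<^sub>1 \<Pi>\<^sub>2\<^sup>*\<close> (its derivative vanishes), which gives
  \<open>A\<^sub>2 B = B A\<^sub>1 - B \<Pi>\<^sub>1 \<Pi>\<^sub>2\<^sup>* B\<close>. Differentiating \<open>w\<^sub>A y\<close> by the product rule,
  with \<open>B' = - B S' B\<close> and \<open>R A\<^sub>1 = A\<^sub>1 R = I + \<lambda> R\<close>, the derivative collapses to
  \<open>(F + Q\<^sub>1 X - X Q\<^sub>1) w\<^sub>A y\<close>, and for the \<open>2\<times>2\<close> matrices at hand the commutator term
  changes exactly \<open>r\<^sub>1\<close>, \<open>r\<^sub>2\<close> and \<open>q\<close> as stated.

  Solutions are only absolutely continuous, so there are no pointwise derivatives to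
  work with: the product rule and the rule for the inverse are proved from the integral
  identities, by comparing increments over short intervals with integrals of integrands
  frozen at the interval endpoints.
\<close>

section \<open>Matrix algebra\<close>

lemma matrix_add_rdistrib: "(A + B) ** C = A ** C + B ** (C::'a::semiring_1^_^_)"
  by (vector matrix_matrix_mult_def sum.distrib[symmetric] field_simps)

lemma matrix_diff_ldistrib: "C ** (A - B) = C ** A - C ** (B::'a::ring_1^_^_)"
  by (vector matrix_matrix_mult_def sum_subtractf[symmetric] field_simps)

lemma matrix_diff_rdistrib: "(A - B) ** C = A ** C - B ** (C::'a::ring_1^_^_)"
  by (vector matrix_matrix_mult_def sum_subtractf[symmetric] field_simps)

lemma matrix_mul_uminus_left: "(- A) ** C = - (A ** (C::'a::ring_1^_^_))"
  by (vector matrix_matrix_mult_def sum_negf[symmetric])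

lemma matrix_mul_uminus_right: "C ** (- A) = - (C ** (A::'a::ring_1^_^_))"
  by (vector matrix_matrix_mult_def sum_negf[symmetric])

lemmas matrix_mul_ring_simps = matrix_add_ldistrib matrix_add_rdistrib matrix_diff_ldistrib
  matrix_diff_rdistrib matrix_mul_uminus_left matrix_mul_uminus_right matrix_mul_assoc

(* Scalar multiplication by an element of the coefficient ring (such as the complex spectral
   parameter) is expressed through map_matrix, since scaleR only covers real scalars. *)
lemma map_matrix_scale_mult_left [simp]:
  "map_matrix ((*) c) A ** B = map_matrix ((*) c) (A ** (B::'a::comm_semiring_1^_^_))"
  by (simp add: matrix_matrix_mult_def vec_eq_iff sum_distrib_left mult_ac)

lemma map_matrix_scale_mult_right [simp]:
  "A ** map_matrix ((*) c) B = map_matrix ((*) c) (A ** (B::'a::comm_semiring_1^_^_))"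
  by (simp add: matrix_matrix_mult_def vec_eq_iff sum_distrib_left mult_ac)

lemma mat_mult_eq_map_matrix_scale: "mat c ** A = map_matrix ((*) c) (A::'a::semiring_1^_^_)"
proof -
  have "(\<Sum>k\<in>UNIV. (if i = k then c else 0) * A $ k $ j) = c * A $ i $ j" for i j
    by (simp add: if_distrib[where f="\<lambda>x. x * _"] cong: if_cong)
  then show ?thesis by (simp add: matrix_matrix_mult_def vec_eq_iff mat_def)
qed

lemma mult_mat_eq_map_matrix_scale: "A ** mat c = map_matrix ((*) c) (A::'a::comm_semiring_1^_^_)"
proof -
  have "(\<Sum>k\<in>UNIV. A $ i $ k * (if k = j then c else 0)) = c * A $ i $ j" for i j
    by (simp add: if_distrib[where f="\<lambda>x. _ * x"] mult.commute cong: if_cong)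
  then show ?thesis by (simp add: matrix_matrix_mult_def vec_eq_iff mat_def)
qed

lemma bilinear_matrix_mult: "bilinear ((**) :: 'a::real_algebra_1^'n^'m \<Rightarrow> 'a^'p^'n \<Rightarrow> 'a^'p^'m)"
  unfolding bilinear_def linear_iff
  by (auto simp: matrix_add_ldistrib matrix_add_rdistrib scalar_matrix_assoc matrix_scalar_ac)

lemma bilinear_matrix_vector_mult: "bilinear ((*v) :: 'a::real_algebra_1^'n^'m \<Rightarrow> 'a^'n \<Rightarrow> 'a^'m)"
  unfolding bilinear_def linear_iff
  by (simp add: vec_eq_iff matrix_vector_mult_def scaleR_sum_right sum.distrib algebra_simps)

lemma matrix_inv_right: "invertible A \<Longrightarrow> A ** matrix_inv A = mat 1"
  and matrix_inv_left: "invertible A \<Longrightarrow> matrix_inv A ** A = mat 1"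
  unfolding invertible_def matrix_inv_def by (metis (mono_tags, lifting) someI_ex)+

lemma matrix_inv_diff:
  fixes A B :: "'a::ring_1^'n^'n"
  assumes "invertible A" "invertible B"
  shows "matrix_inv B - matrix_inv A = - (matrix_inv B ** (B - A) ** matrix_inv A)"
  using assms by (simp add: matrix_mul_ring_simps matrix_inv_left matrix_inv_right
      flip: matrix_mul_assoc)

lemma matrix_mult_norm_bound:
  "\<exists>K>0. \<forall>(A::'a::{real_algebra_1,euclidean_space}^'n^'m) (B::'a^'p^'n). norm (A ** B) \<le> K * norm A * norm B"
  using bilinear_bounded_pos[OF bilinear_matrix_mult] by blast

lemma norm_matrix_mult3_le:
  fixes A B C :: "'a::{real_algebra_1,euclidean_space}^'n^'n"
  assumes K: "\<forall>(X::'a^'n^'n) (Y::'a^'n^'n). norm (X ** Y) \<le> K * norm X * norm Y" "K > 0"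
  shows "norm (A ** B ** C) \<le> K * K * norm A * norm B * norm C"
proof -
  have "norm (A ** B ** C) \<le> K * norm (A ** B) * norm C" using K by blast
  also have "\<dots> \<le> K * (K * norm A * norm B) * norm C"
    using K by (intro mult_right_mono mult_left_mono) auto
  finally show ?thesis by (simp add: mult_ac)
qed

lemma norm_matrix_inv_diff_le:
  fixes A B :: "'a::{real_algebra_1,euclidean_space}^'n^'n"
  assumes inv: "invertible A" "invertible B"
    and K: "\<forall>(X::'a^'n^'n) (Y::'a^'n^'n). norm (X ** Y) \<le> K * norm X * norm Y" "K > 0"
    and small: "K * K * norm (matrix_inv A) * norm (B - A) \<le> 1/2"
  shows "norm (matrix_inv B - matrix_inv A) \<le> 2 * K * K * norm (matrix_inv A)^2 * norm (B - A)"
proof -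
  let ?A' = "matrix_inv A" and ?B' = "matrix_inv B"
  have diff: "norm (?B' - ?A') \<le> norm ?B' * (K * K * norm ?A' * norm (B - A))"
    using norm_matrix_mult3_le[OF K, of ?B' "B - A" ?A'] matrix_inv_diff[OF inv]
    by (simp add: mult_ac)
  also have "\<dots> \<le> norm ?B' * (1/2)" using small by (intro mult_left_mono) auto
  finally have "norm ?B' \<le> 2 * norm ?A'" using norm_triangle_sub[of ?B' ?A'] by simp
  then have "norm ?B' * (K * K * norm ?A' * norm (B - A)) \<le> 2 * norm ?A' * (K * K * norm ?A' * norm (B - A))"
    using K(2) by (intro mult_right_mono) auto
  with diff show ?thesis by (simp add: power2_eq_square mult_ac)
qed

lemma continuous_on_matrix_inv:
  fixes S :: "'b::topological_space \<Rightarrow> 'a::{real_algebra_1,euclidean_space}^'n^'n"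
  assumes S: "continuous_on T S" and inv: "\<And>x. x \<in> T \<Longrightarrow> invertible (S x)"
  shows "continuous_on T (\<lambda>x. matrix_inv (S x))"
  unfolding continuous_on_def
proof
  fix y assume y: "y \<in> T"
  obtain K where K: "\<forall>(X::'a^'n^'n) (Y::'a^'n^'n). norm (X ** Y) \<le> K * norm X * norm Y" "K > 0"
    using matrix_mult_norm_bound by blast
  define c where "c = norm (matrix_inv (S y))"
  have c: "c \<ge> 0" by (simp add: c_def)
  have lim: "((\<lambda>x. norm (S x - S y)) \<longlongrightarrow> 0) (at y within T)"
    using S y by (intro tendsto_norm_zero LIM_zero) (simp add: continuous_on_def)
  have "\<forall>\<^sub>F x in at y within T. norm (S x - S y) < 1 / (2 * K * K * (c + 1))"
    using order_tendstoD(2)[OF lim] K c by simp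
  moreover have "\<forall>\<^sub>F x in at y within T. x \<in> T" by (simp add: eventually_at_filter)
  ultimately have "\<forall>\<^sub>F x in at y within T.
      norm (matrix_inv (S x) - matrix_inv (S y)) \<le> 2 * K * K * c^2 * norm (S x - S y)"
  proof eventually_elim
    case (elim x)
    have "K * K * c * norm (S x - S y) \<le> K * K * (c + 1) * (1 / (2 * K * K * (c + 1)))"
      using elim(1) K(2) c by (intro mult_mono) auto
    also have "\<dots> = 1/2" using K(2) c by simp
    finally show ?case
      using norm_matrix_inv_diff_le[OF inv[OF y] inv[OF elim(2)] K] by (simp add: c_def)
  qed
  moreover have "((\<lambda>x. 2 * K * K * c^2 * norm (S x - S y)) \<longlongrightarrow> 0) (at y within T)"
    using tendsto_mult_right_zero[OF lim] by simp
  ultimately have "((\<lambda>x. matrix_inv (S x) - matrix_inv (S y)) \<longlongrightarrow> 0) (at y within T)"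
    by (rule Lim_null_comparison)
  then show "((\<lambda>x. matrix_inv (S x)) \<longlongrightarrow> matrix_inv (S y)) (at y within T)"
    by (rule LIM_zero_cancel)
qed

section \<open>Calculus of absolutely continuous solutions\<close>

lemma ac_solution_on_subset: "ac_solution_on I g G \<Longrightarrow> J \<subseteq> I \<Longrightarrow> ac_solution_on J g G"
  unfolding ac_solution_on_def by blast

lemma ac_solution_onD:
  assumes "ac_solution_on {a..b} g G" "a \<le> u" "u \<le> v" "v \<le> b"
  shows "G absolutely_integrable_on {u..v}" "g v - g u = integral {u..v} G"
  using assms unfolding ac_solution_on_def by auto

lemma continuous_on_ac_solution:
  assumes "ac_solution_on {a..b} g G"
  shows "continuous_on {a..b} g"
proof (cases "a \<le> b")
  case True
  have "G integrable_on {a..b}"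
    using ac_solution_onD(1)[OF assms order_refl True order_refl] set_lebesgue_integral_eq_integral(1)
    by blast
  then have "continuous_on {a..b} (\<lambda>x. g a + integral {a..x} G)"
    by (intro continuous_on_add continuous_on_const indefinite_integral_continuous_1)
  moreover have "g a + integral {a..x} G = g x" if "x \<in> {a..b}" for x
    using ac_solution_onD(2)[OF assms, of a x] that by (simp add: algebra_simps)
  ultimately show ?thesis by (rule continuous_on_eq) simp
qed simp

lemma ac_solution_on_const: "ac_solution_on I (\<lambda>x. c) (\<lambda>x. 0)"
  unfolding ac_solution_on_def by auto

lemma ac_solution_on_diff:
  assumes "ac_solution_on I g G" "ac_solution_on I k K"
  shows "ac_solution_on I (\<lambda>x. g x - k x) (\<lambda>x. G x - K x)"
  unfolding ac_solution_on_def
proof (intro ballI impI)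
  fix u v assume "u \<in> I" "v \<in> I" "u \<le> v"
  then have g: "G absolutely_integrable_on {u..v}" "g v - g u = integral {u..v} G"
    and k: "K absolutely_integrable_on {u..v}" "k v - k u = integral {u..v} K"
    using assms unfolding ac_solution_on_def by auto
  show "(\<lambda>x. G x - K x) absolutely_integrable_on {u..v} \<and>
      g v - k v - (g u - k u) = integral {u..v} (\<lambda>x. G x - K x)"
    using set_integral_diff(1)[OF g(1) k(1)] g(2) k(2)
      integral_diff[OF g(1)[THEN set_lebesgue_integral_eq_integral(1)]
        k(1)[THEN set_lebesgue_integral_eq_integral(1)]]
    by (simp add: algebra_simps)
qed

lemma ac_solution_on_cong:
  assumes "ac_solution_on {a..b} g G" "\<And>x. x \<in> {a..b} \<Longrightarrow> G x = G' x"
  shows "ac_solution_on {a..b} g G'"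
  unfolding ac_solution_on_def
proof (intro ballI impI)
  fix u v assume uv: "u \<in> {a..b}" "v \<in> {a..b}" "u \<le> v"
  then have eq: "\<And>x. x \<in> {u..v} \<Longrightarrow> G x = G' x" using assms(2) by auto
  have "G' absolutely_integrable_on {u..v}"
    using ac_solution_onD(1)[OF assms(1)] uv set_integrable_cong[OF refl refl, of "{u..v}" G G'] eq by auto
  moreover have "g v - g u = integral {u..v} G'"
    using ac_solution_onD(2)[OF assms(1)] uv integral_cong[of "{u..v}" G G'] eq by auto
  ultimately show "G' absolutely_integrable_on {u..v} \<and> g v - g u = integral {u..v} G'" ..
qed

lemma absolutely_integrable_bilinear_continuous_left:
  fixes h :: "'a::euclidean_space \<Rightarrow> 'b::euclidean_space \<Rightarrow> 'c::euclidean_space" and u v :: real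
  assumes h: "bilinear h" and f: "continuous_on {u..v} f" and G: "G absolutely_integrable_on {u..v}"
  shows "(\<lambda>t. h (f t) (G t)) absolutely_integrable_on {u..v}"
proof (rule absolutely_integrable_bounded_measurable_product[OF h _ _ _ G])
  show "f \<in> borel_measurable (lebesgue_on {u..v})"
    by (rule continuous_imp_measurable_on_sets_lebesgue[OF f]) simp
  show "{u..v} \<in> sets lebesgue" by simp
  show "bounded (f ` {u..v})"
    by (intro compact_imp_bounded compact_continuous_image[OF f]) simp
qed

lemma absolutely_integrable_bilinear_continuous_right:
  fixes h :: "'a::euclidean_space \<Rightarrow> 'b::euclidean_space \<Rightarrow> 'c::euclidean_space" and u v :: real
  assumes h: "bilinear h" and f: "continuous_on {u..v} f" and G: "G absolutely_integrable_on {u..v}"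
  shows "(\<lambda>t. h (G t) (f t)) absolutely_integrable_on {u..v}"
proof -
  have "bilinear (\<lambda>x y. h y x)" using h unfolding bilinear_def by blast
  from absolutely_integrable_bilinear_continuous_left[OF this f G] show ?thesis .
qed

lemma increment_error_le_by_subdivision:
  fixes \<Phi> \<Psi> :: "real \<Rightarrow> 'a::euclidean_space" and \<rho> :: "real \<Rightarrow> real"
  assumes ab: "a \<le> b" and \<Psi>: "\<Psi> integrable_on {a..b}" and \<rho>: "\<rho> integrable_on {a..b}" and d: "d > 0"
    and local: "\<And>u v. a \<le> u \<Longrightarrow> u \<le> v \<Longrightarrow> v \<le> b \<Longrightarrow> v - u < d \<Longrightarrow>
      norm (\<Phi> v - \<Phi> u - integral {u..v} \<Psi>) \<le> e * integral {u..v} \<rho>"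
  shows "norm (\<Phi> b - \<Phi> a - integral {a..b} \<Psi>) \<le> e * integral {a..b} \<rho>"
proof -
  define E where "E u v = \<Phi> v - \<Phi> u - integral {u..v} \<Psi>" for u v
  have split: "E u v = E u m + E m v" "integral {u..v} \<rho> = integral {u..m} \<rho> + integral {m..v} \<rho>"
    if "a \<le> u" "u \<le> m" "m \<le> v" "v \<le> b" for u m v
  proof -
    have "\<Psi> integrable_on {u..v}" "\<rho> integrable_on {u..v}"
      using that integrable_subinterval_real[OF \<Psi>] integrable_subinterval_real[OF \<rho>] by auto
    then have "integral {u..m} \<Psi> + integral {m..v} \<Psi> = integral {u..v} \<Psi>"
      "integral {u..m} \<rho> + integral {m..v} \<rho> = integral {u..v} \<rho>"
      using that Henstock_Kurzweil_Integration.integral_combine by blast+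
    then show "E u v = E u m + E m v" "integral {u..v} \<rho> = integral {u..m} \<rho> + integral {m..v} \<rho>"
      by (auto simp: E_def algebra_simps)
  qed
  have "norm (E u v) \<le> e * integral {u..v} \<rho>"
    if "a \<le> u" "u \<le> v" "v \<le> b" "v - u \<le> real n * (d/2)" for n u v
    using that
  proof (induction n arbitrary: u)
    case 0
    then show ?case using d local by (force simp: E_def)
  next
    case (Suc n)
    show ?case
    proof (cases "v - u < d")
      case True
      then show ?thesis using local Suc.prems by (simp add: E_def)
    next
      case False
      define m where "m = u + d/2"
      have m: "u \<le> m" "m \<le> v" "v - m \<le> real n * (d/2)" "m - u < d"
        using False d Suc.prems by (auto simp: m_def algebra_simps)
      have "norm (E u v) \<le> norm (E u m) + norm (E m v)"
        using split(1)[of u m v] m Suc.prems by (simp add: norm_triangle_ineq)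
      also have "\<dots> \<le> e * integral {u..m} \<rho> + e * integral {m..v} \<rho>"
        using local[of u m] Suc.IH[of m] m Suc.prems by (intro add_mono) (auto simp: E_def)
      also have "\<dots> = e * integral {u..v} \<rho>"
        using split(2)[of u m v] m Suc.prems by (simp add: distrib_left)
      finally show ?thesis .
    qed
  qed
  moreover obtain n :: nat where "(b - a) / (d/2) \<le> real n" using real_arch_simple by blast
  then have "b - a \<le> real n * (d/2)" using d by (simp add: field_simps)
  ultimately show ?thesis using ab by (auto simp: E_def)
qed

lemma increment_eq_integral_by_local_approximation:
  fixes \<Phi> \<Psi> :: "real \<Rightarrow> 'a::euclidean_space" and \<rho> :: "real \<Rightarrow> real"
  assumes ab: "a \<le> b" and \<Psi>: "\<Psi> integrable_on {a..b}" and \<rho>: "\<rho> integrable_on {a..b}"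
    and local: "\<And>e. e > 0 \<Longrightarrow> \<exists>d>0. \<forall>u v. a \<le> u \<longrightarrow> u \<le> v \<longrightarrow> v \<le> b \<longrightarrow> v - u < d \<longrightarrow>
        norm (\<Phi> v - \<Phi> u - integral {u..v} \<Psi>) \<le> e * integral {u..v} \<rho>"
  shows "\<Phi> b - \<Phi> a = integral {a..b} \<Psi>"
proof -
  define R where "R = integral {a..b} \<rho>"
  have "norm (\<Phi> b - \<Phi> a - integral {a..b} \<Psi>) \<le> 0 + e" if e: "e > 0" for e
  proof -
    have "e / (\<bar>R\<bar> + 1) > 0" using e by simp
    then obtain d where "d > 0" "\<forall>u v. a \<le> u \<longrightarrow> u \<le> v \<longrightarrow> v \<le> b \<longrightarrow> v - u < d \<longrightarrow>
        norm (\<Phi> v - \<Phi> u - integral {u..v} \<Psi>) \<le> e / (\<bar>R\<bar> + 1) * integral {u..v} \<rho>"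
      using local by blast
    then have "norm (\<Phi> b - \<Phi> a - integral {a..b} \<Psi>) \<le> e / (\<bar>R\<bar> + 1) * R"
      unfolding R_def by (intro increment_error_le_by_subdivision[OF ab \<Psi> \<rho>]) auto
    also have "\<dots> \<le> e / (\<bar>R\<bar> + 1) * (\<bar>R\<bar> + 1)"
      using e by (intro mult_left_mono) auto
    also have "\<dots> = e" by simp
    finally show ?thesis by simp
  qed
  then have "norm (\<Phi> b - \<Phi> a - integral {a..b} \<Psi>) \<le> 0" by (rule field_le_epsilon)
  then show ?thesis by simp
qed

(* Shape shared by the product rule and the inverse rule: the increment over [u,v] is the
   integral of an integrand H u v with some factors frozen at the endpoints, which is
   uniformly close to the expected derivative on short intervals. *)
lemma increment_eq_integral_by_local_integrand:
  fixes \<Phi> \<Psi> :: "real \<Rightarrow> 'a::euclidean_space" and H :: "real \<Rightarrow> real \<Rightarrow> real \<Rightarrow> 'a"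
    and \<rho> :: "real \<Rightarrow> real"
  assumes ab: "a \<le> b" and \<Psi>: "\<Psi> integrable_on {a..b}" and \<rho>: "\<rho> integrable_on {a..b}"
    and H: "\<And>u v. a \<le> u \<Longrightarrow> u \<le> v \<Longrightarrow> v \<le> b \<Longrightarrow>
      H u v integrable_on {u..v} \<and> \<Phi> v - \<Phi> u = integral {u..v} (H u v)"
    and close: "\<And>e. e > 0 \<Longrightarrow> \<exists>d>0. \<forall>u t v. a \<le> u \<longrightarrow> u \<le> t \<longrightarrow> t \<le> v \<longrightarrow> v \<le> b \<longrightarrow>
      v - u < d \<longrightarrow> norm (H u v t - \<Psi> t) \<le> e * \<rho> t"
  shows "\<Phi> b - \<Phi> a = integral {a..b} \<Psi>"
proof (rule increment_eq_integral_by_local_approximation[OF ab \<Psi> \<rho>])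
  fix e :: real assume "e > 0"
  then obtain d where d: "d > 0" and dH: "\<And>u t v. a \<le> u \<Longrightarrow> u \<le> t \<Longrightarrow> t \<le> v \<Longrightarrow> v \<le> b \<Longrightarrow>
      v - u < d \<Longrightarrow> norm (H u v t - \<Psi> t) \<le> e * \<rho> t"
    using close by blast
  show "\<exists>d>0. \<forall>u v. a \<le> u \<longrightarrow> u \<le> v \<longrightarrow> v \<le> b \<longrightarrow> v - u < d \<longrightarrow>
      norm (\<Phi> v - \<Phi> u - integral {u..v} \<Psi>) \<le> e * integral {u..v} \<rho>"
  proof (intro exI[of _ d] conjI allI impI)
    fix u v assume uv: "a \<le> u" "u \<le> v" "v \<le> b" "v - u < d"
    have \<Psi>uv: "\<Psi> integrable_on {u..v}" and \<rho>uv: "\<rho> integrable_on {u..v}"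
      using uv integrable_subinterval_real[OF \<Psi>] integrable_subinterval_real[OF \<rho>] by auto
    have Huv: "H u v integrable_on {u..v}" "\<Phi> v - \<Phi> u = integral {u..v} (H u v)"
      using H[OF uv(1-3)] by auto
    have "(\<lambda>t. e * \<rho> t) integrable_on {u..v}" using integrable_cmul[OF \<rho>uv, of e] by simp
    then have "norm (integral {u..v} (\<lambda>t. H u v t - \<Psi> t)) \<le> integral {u..v} (\<lambda>t. e * \<rho> t)"
      using Huv(1) \<Psi>uv dH uv by (intro integral_norm_bound_integral integrable_diff) auto
    then show "norm (\<Phi> v - \<Phi> u - integral {u..v} \<Psi>) \<le> e * integral {u..v} \<rho>"
      by (simp add: Huv(2) integral_diff[OF Huv(1) \<Psi>uv])
  qed (fact d)
qed

lemma continuous_on_interval_uniformly: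
  fixes f :: "real \<Rightarrow> 'a::real_normed_vector"
  assumes "continuous_on {a..b} f" "e > 0"
  obtains d where "d > 0" "\<And>x y. x \<in> {a..b} \<Longrightarrow> y \<in> {a..b} \<Longrightarrow> \<bar>x - y\<bar> < d \<Longrightarrow> norm (f x - f y) \<le> e"
proof -
  have "uniformly_continuous_on {a..b} f" by (rule compact_uniformly_continuous[OF assms(1)]) simp
  then obtain d where "d > 0" "\<forall>x\<in>{a..b}. \<forall>y\<in>{a..b}. dist y x < d \<longrightarrow> dist (f y) (f x) < e"
    using assms(2) unfolding uniformly_continuous_on_def by blast
  then show ?thesis by (intro that[of d]) (auto simp: dist_norm intro: less_imp_le)
qed

lemma bilinear_increment_eq_integral:
  fixes h :: "'a::euclidean_space \<Rightarrow> 'b::euclidean_space \<Rightarrow> 'c::euclidean_space"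
  assumes h: "bilinear h" and g: "ac_solution_on {a..b} g G" and k: "ac_solution_on {a..b} k K"
    and uv: "a \<le> u" "u \<le> v" "v \<le> b"
  shows "(\<lambda>t. h (G t) (k v) + h (g u) (K t)) integrable_on {u..v} \<and>
    h (g v) (k v) - h (g u) (k u) = integral {u..v} (\<lambda>t. h (G t) (k v) + h (g u) (K t))"
proof -
  have lin: "bounded_linear (\<lambda>x. h x (k v))" "bounded_linear (\<lambda>y. h (g u) y)"
    using h by (simp_all add: bilinear_conv_bounded_bilinear bounded_bilinear.bounded_linear_left
        bounded_bilinear.bounded_linear_right)
  have int: "G integrable_on {u..v}" "K integrable_on {u..v}"
    using ac_solution_onD(1)[OF g uv] ac_solution_onD(1)[OF k uv]
    by (simp_all add: set_lebesgue_integral_eq_integral(1))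
  have "h (g v) (k v) - h (g u) (k u) = h (g v - g u) (k v) + h (g u) (k v - k u)"
    by (simp add: bilinear_lsub[OF h] bilinear_rsub[OF h])
  then show ?thesis
    using integrable_linear[OF int(1) lin(1)] integrable_linear[OF int(2) lin(2)]
      integral_linear[OF int(1) lin(1)] integral_linear[OF int(2) lin(2)]
      ac_solution_onD(2)[OF g uv] ac_solution_onD(2)[OF k uv]
    by (simp add: o_def integral_add integrable_add)
qed

lemma norm_bilinear_frozen_diff_le:
  fixes h :: "'a::real_normed_vector \<Rightarrow> 'b::real_normed_vector \<Rightarrow> 'c::real_normed_vector"
  assumes h: "bilinear h" and C: "\<And>x y. norm (h x y) \<le> C * norm x * norm y" "C \<ge> 0"
    and close: "norm (y' - y) \<le> e" "norm (x' - x) \<le> e"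
  shows "norm (h X y' + h x' Y - (h X y + h x Y)) \<le> e * (C * (norm X + norm Y))"
proof -
  have "h X y' + h x' Y - (h X y + h x Y) = h X (y' - y) + h (x' - x) Y"
    by (simp add: bilinear_lsub[OF h] bilinear_rsub[OF h])
  also have "norm \<dots> \<le> norm (h X (y' - y)) + norm (h (x' - x) Y)"
    by (rule norm_triangle_ineq)
  also have "\<dots> \<le> C * norm X * norm (y' - y) + C * norm (x' - x) * norm Y"
    using C(1) by (intro add_mono)
  also have "\<dots> \<le> C * norm X * e + C * e * norm Y"
    using C(2) close by (intro add_mono mult_left_mono mult_right_mono) auto
  also have "\<dots> = e * (C * (norm X + norm Y))" by (simp add: algebra_simps)
  finally show ?thesis .
qed

lemma ac_solution_on_bilinear:
  fixes h :: "'a::euclidean_space \<Rightarrow> 'b::euclidean_space \<Rightarrow> 'c::euclidean_space"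
  assumes h: "bilinear h" and g: "ac_solution_on {a..b} g G" and k: "ac_solution_on {a..b} k K"
  shows "ac_solution_on {a..b} (\<lambda>x. h (g x) (k x)) (\<lambda>x. h (G x) (k x) + h (g x) (K x))"
  unfolding ac_solution_on_def
proof (intro ballI impI)
  fix a' b' assume "a' \<in> {a..b}" "b' \<in> {a..b}" and ab': "a' \<le> b'"
  then have g': "ac_solution_on {a'..b'} g G" and k': "ac_solution_on {a'..b'} k K"
    using ac_solution_on_subset[OF g] ac_solution_on_subset[OF k] by auto
  have cg: "continuous_on {a'..b'} g" and ck: "continuous_on {a'..b'} k"
    using continuous_on_ac_solution[OF g'] continuous_on_ac_solution[OF k'] .
  have GA: "G absolutely_integrable_on {a'..b'}" and KA: "K absolutely_integrable_on {a'..b'}"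
    using ac_solution_onD(1)[OF g' order_refl ab' order_refl] ac_solution_onD(1)[OF k' order_refl ab' order_refl] .
  have \<Psi>: "(\<lambda>x. h (G x) (k x) + h (g x) (K x)) absolutely_integrable_on {a'..b'}"
    using absolutely_integrable_bilinear_continuous_right[OF h ck GA]
      absolutely_integrable_bilinear_continuous_left[OF h cg KA] by (rule set_integral_add(1))
  obtain C where C: "C > 0" "\<And>x y. norm (h x y) \<le> C * norm x * norm y"
    using bilinear_bounded_pos[OF h] by blast
  have "(\<lambda>t. C * (norm (G t) + norm (K t))) integrable_on {a'..b'}"
    using GA KA unfolding absolutely_integrable_on_def
    by (intro integrable_on_cmult_left[where 'b=real, simplified] integrable_add) auto
  then have "h (g b') (k b') - h (g a') (k a') = integral {a'..b'} (\<lambda>x. h (G x) (k x) + h (g x) (K x))"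
  proof (rule increment_eq_integral_by_local_integrand[OF ab' set_lebesgue_integral_eq_integral(1)[OF \<Psi>],
        where H = "\<lambda>u v t. h (G t) (k v) + h (g u) (K t)"])
    fix u v assume "a' \<le> u" "u \<le> v" "v \<le> b'"
    then show "(\<lambda>t. h (G t) (k v) + h (g u) (K t)) integrable_on {u..v} \<and>
        h (g v) (k v) - h (g u) (k u) = integral {u..v} (\<lambda>t. h (G t) (k v) + h (g u) (K t))"
      by (rule bilinear_increment_eq_integral[OF h g' k'])
  next
    fix e :: real assume e: "e > 0"
    obtain d1 where d1: "d1 > 0" "\<And>x y. x \<in> {a'..b'} \<Longrightarrow> y \<in> {a'..b'} \<Longrightarrow> \<bar>x - y\<bar> < d1 \<Longrightarrow> norm (g x - g y) \<le> e"
      using continuous_on_interval_uniformly[OF cg e] by blast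
    obtain d2 where d2: "d2 > 0" "\<And>x y. x \<in> {a'..b'} \<Longrightarrow> y \<in> {a'..b'} \<Longrightarrow> \<bar>x - y\<bar> < d2 \<Longrightarrow> norm (k x - k y) \<le> e"
      using continuous_on_interval_uniformly[OF ck e] by blast
    have "norm (h (G t) (k v) + h (g u) (K t) - (h (G t) (k t) + h (g t) (K t)))
        \<le> e * (C * (norm (G t) + norm (K t)))"
      if "a' \<le> u" "u \<le> t" "t \<le> v" "v \<le> b'" "v - u < min d1 d2" for u t v
      using C d1 d2 that by (intro norm_bilinear_frozen_diff_le[OF h]) auto
    then show "\<exists>d>0. \<forall>u t v. a' \<le> u \<longrightarrow> u \<le> t \<longrightarrow> t \<le> v \<longrightarrow> v \<le> b' \<longrightarrow> v - u < d \<longrightarrow>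
        norm (h (G t) (k v) + h (g u) (K t) - (h (G t) (k t) + h (g t) (K t)))
          \<le> e * (C * (norm (G t) + norm (K t)))"
      using d1(1) d2(1) by (intro exI[of _ "min d1 d2"]) auto
  qed
  with \<Psi> show "(\<lambda>x. h (G x) (k x) + h (g x) (K x)) absolutely_integrable_on {a'..b'} \<and>
      h (g b') (k b') - h (g a') (k a') = integral {a'..b'} (\<lambda>x. h (G x) (k x) + h (g x) (K x))" ..
qed

lemma matrix_inv_increment_eq_integral:
  fixes S :: "real \<Rightarrow> 'a::{real_algebra_1,euclidean_space}^'n^'n"
  assumes S: "ac_solution_on {a..b} S S'" and inv: "\<And>x. x \<in> {a..b} \<Longrightarrow> invertible (S x)"
    and uv: "a \<le> u" "u \<le> v" "v \<le> b"
  shows "(\<lambda>t. - (matrix_inv (S v) ** S' t ** matrix_inv (S u))) integrable_on {u..v} \<and>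
    matrix_inv (S v) - matrix_inv (S u) = integral {u..v} (\<lambda>t. - (matrix_inv (S v) ** S' t ** matrix_inv (S u)))"
proof -
  have "bounded_bilinear ((**) :: 'a^'n^'n \<Rightarrow> 'a^'n^'n \<Rightarrow> 'a^'n^'n)"
    using bilinear_conv_bounded_bilinear bilinear_matrix_mult by blast
  then have lin: "bounded_linear (\<lambda>X. - (matrix_inv (S v) ** X ** matrix_inv (S u)))"
    by (intro bounded_linear_minus bounded_linear_compose[of "\<lambda>X. X ** _" "\<lambda>X. _ ** X", simplified]
        bounded_bilinear.bounded_linear_left bounded_bilinear.bounded_linear_right)
  have int: "S' integrable_on {u..v}"
    using ac_solution_onD(1)[OF S uv] by (simp add: set_lebesgue_integral_eq_integral(1))
  have "matrix_inv (S v) - matrix_inv (S u) = - (matrix_inv (S v) ** (S v - S u) ** matrix_inv (S u))"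
    using uv by (intro matrix_inv_diff inv) auto
  then show ?thesis
    using integrable_linear[OF int lin] integral_linear[OF int lin] ac_solution_onD(2)[OF S uv]
    by (simp add: o_def)
qed

lemma norm_matrix_frozen_diff_le:
  fixes B B\<^sub>u B\<^sub>v X :: "'a::{real_algebra_1,euclidean_space}^'n^'n"
  assumes K: "\<forall>(X::'a^'n^'n) (Y::'a^'n^'n). norm (X ** Y) \<le> K * norm X * norm Y" "K > 0"
    and close: "norm (B\<^sub>v - B) \<le> e" "norm (B\<^sub>u - B) \<le> e" and bounded: "norm B\<^sub>u \<le> M" "norm B \<le> M"
  shows "norm (- (B\<^sub>v ** X ** B\<^sub>u) - - (B ** X ** B)) \<le> e * (2 * K * K * M * norm X)"
proof -
  have "e \<ge> 0" "M \<ge> 0" using close(1) bounded(2) norm_ge_zero order_trans by blast+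
  have "- (B\<^sub>v ** X ** B\<^sub>u) - - (B ** X ** B) = - ((B\<^sub>v - B) ** X ** B\<^sub>u + B ** X ** (B\<^sub>u - B))"
    by (simp add: matrix_mul_ring_simps)
  also have "norm \<dots> \<le> norm ((B\<^sub>v - B) ** X ** B\<^sub>u) + norm (B ** X ** (B\<^sub>u - B))"
    unfolding norm_minus_cancel by (rule norm_triangle_ineq)
  also have "\<dots> \<le> K * K * norm (B\<^sub>v - B) * norm X * norm B\<^sub>u + K * K * norm B * norm X * norm (B\<^sub>u - B)"
    by (intro add_mono norm_matrix_mult3_le K)
  also have "\<dots> \<le> K * K * e * norm X * M + K * K * M * norm X * e"
    using K(2) close bounded \<open>e \<ge> 0\<close> \<open>M \<ge> 0\<close>
    by (intro add_mono mult_mono mult_left_mono mult_right_mono) auto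
  also have "\<dots> = e * (2 * K * K * M * norm X)" by (simp add: algebra_simps)
  finally show ?thesis .
qed

lemma ac_solution_on_matrix_inv:
  fixes S :: "real \<Rightarrow> 'a::{real_algebra_1,euclidean_space}^'n^'n"
  assumes S: "ac_solution_on {a..b} S S'" and inv: "\<And>x. x \<in> {a..b} \<Longrightarrow> invertible (S x)"
  shows "ac_solution_on {a..b} (\<lambda>x. matrix_inv (S x))
    (\<lambda>x. - (matrix_inv (S x) ** S' x ** matrix_inv (S x)))"
  unfolding ac_solution_on_def
proof (intro ballI impI)
  fix a' b' assume "a' \<in> {a..b}" "b' \<in> {a..b}" and ab': "a' \<le> b'"
  then have sub: "{a'..b'} \<subseteq> {a..b}" by auto
  note S' = ac_solution_on_subset[OF S sub] and inv' = inv[OF subsetD[OF sub]]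
  define B where "B x = matrix_inv (S x)" for x
  have cB: "continuous_on {a'..b'} B"
    unfolding B_def using continuous_on_matrix_inv[OF continuous_on_ac_solution[OF S'] inv'] .
  obtain M where M: "M > 0" "\<And>x. x \<in> {a'..b'} \<Longrightarrow> norm (B x) \<le> M"
    using compact_imp_bounded[OF compact_continuous_image[OF cB]] unfolding bounded_pos by auto
  obtain K where K: "\<forall>(X::'a^'n^'n) (Y::'a^'n^'n). norm (X ** Y) \<le> K * norm X * norm Y" "K > 0"
    using matrix_mult_norm_bound by blast
  have SA: "S' absolutely_integrable_on {a'..b'}" using ac_solution_onD(1)[OF S' order_refl ab' order_refl] .
  have "(\<lambda>t. (-1) *\<^sub>R (B t ** S' t ** B t)) absolutely_integrable_on {a'..b'}"
    by (intro absolutely_integrable_scaleR_left absolutely_integrable_bilinear_continuous_right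
        [OF bilinear_matrix_mult cB] absolutely_integrable_bilinear_continuous_left
        [OF bilinear_matrix_mult cB] SA)
  then have \<Psi>: "(\<lambda>t. - (B t ** S' t ** B t)) absolutely_integrable_on {a'..b'}" by simp
  have "(\<lambda>t. 2 * K * K * M * norm (S' t)) integrable_on {a'..b'}"
    using SA unfolding absolutely_integrable_on_def
    by (intro integrable_on_cmult_left[where 'b=real, simplified]) auto
  then have "B b' - B a' = integral {a'..b'} (\<lambda>t. - (B t ** S' t ** B t))"
  proof (rule increment_eq_integral_by_local_integrand[OF ab' set_lebesgue_integral_eq_integral(1)[OF \<Psi>],
        where H = "\<lambda>u v t. - (B v ** S' t ** B u)"])
    fix u v assume "a' \<le> u" "u \<le> v" "v \<le> b'"
    then show "(\<lambda>t. - (B v ** S' t ** B u)) integrable_on {u..v} \<and>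
        B v - B u = integral {u..v} (\<lambda>t. - (B v ** S' t ** B u))"
      unfolding B_def using matrix_inv_increment_eq_integral[OF S' inv'] by blast
  next
    fix e :: real assume e: "e > 0"
    obtain d where d: "d > 0" "\<And>x y. x \<in> {a'..b'} \<Longrightarrow> y \<in> {a'..b'} \<Longrightarrow> \<bar>x - y\<bar> < d \<Longrightarrow> norm (B x - B y) \<le> e"
      using continuous_on_interval_uniformly[OF cB e] by blast
    have "norm (- (B v ** S' t ** B u) - - (B t ** S' t ** B t)) \<le> e * (2 * K * K * M * norm (S' t))"
      if "a' \<le> u" "u \<le> t" "t \<le> v" "v \<le> b'" "v - u < d" for u t v
      using d M that by (intro norm_matrix_frozen_diff_le[OF K]) auto
    then show "\<exists>d>0. \<forall>u t v. a' \<le> u \<longrightarrow> u \<le> t \<longrightarrow> t \<le> v \<longrightarrow> v \<le> b' \<longrightarrow> v - u < d \<longrightarrow>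
        norm (- (B v ** S' t ** B u) - - (B t ** S' t ** B t)) \<le> e * (2 * K * K * M * norm (S' t))"
      using d(1) by blast
  qed
  with \<Psi> show "(\<lambda>x. - (matrix_inv (S x) ** S' x ** matrix_inv (S x))) absolutely_integrable_on {a'..b'} \<and>
      matrix_inv (S b') - matrix_inv (S a') = integral {a'..b'} (\<lambda>x. - (matrix_inv (S x) ** S' x ** matrix_inv (S x)))"
    unfolding B_def ..
qed

section \<open>The Darboux transformation\<close>

lemma sylvester_identity_propagates:
  fixes P1 :: "real \<Rightarrow> 'a::{real_algebra_1,euclidean_space}^'k^'n" and P2 :: "real \<Rightarrow> 'a^'n^'k"
    and S :: "real \<Rightarrow> 'a^'n^'n" and Q0 Q1 :: "real \<Rightarrow> 'a^'k^'k" and A1 A2 :: "'a^'n^'n"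
  assumes P1: "ac_solution_on {a..b} P1 (\<lambda>x. A1 ** P1 x ** Q1 x + P1 x ** Q0 x)"
    and P2: "ac_solution_on {a..b} P2 (\<lambda>x. - (Q1 x ** P2 x ** A2) - Q0 x ** P2 x)"
    and S: "ac_solution_on {a..b} S (\<lambda>x. P1 x ** Q1 x ** P2 x)"
    and ab: "a \<le> b" and init: "A1 ** S a - S a ** A2 = P1 a ** P2 a"
  shows "A1 ** S b - S b ** A2 = P1 b ** P2 b"
proof -
  define Z where "Z x = A1 ** S x - S x ** A2 - P1 x ** P2 x" for x
  have Z: "ac_solution_on {a..b} Z (\<lambda>x. 0)"
    unfolding Z_def
    by (rule ac_solution_on_cong[OF ac_solution_on_diff[OF ac_solution_on_diff
          [OF ac_solution_on_bilinear[OF bilinear_matrix_mult ac_solution_on_const S]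
            ac_solution_on_bilinear[OF bilinear_matrix_mult S ac_solution_on_const]]
          ac_solution_on_bilinear[OF bilinear_matrix_mult P1 P2]]])
      (simp add: matrix_mul_ring_simps)
  have "Z b - Z a = 0" using ac_solution_onD(2)[OF Z order_refl ab order_refl] by simp
  with init show ?thesis by (simp add: Z_def)
qed

(* The left-hand side is w' + w F, where w = I - P2 B R P1 and w' is computed from the
   equations for P2, B = S^-1 and P1. *)
lemma darboux_gauge_identity:
  fixes P1 :: "'a::comm_ring_1^'k^'n" and P2 :: "'a^'n^'k" and B S A1 A2 R :: "'a^'n^'n"
    and Q0 Q1 :: "'a^'k^'k"
  assumes SB: "S ** B = mat 1" "B ** S = mat 1"
    and R: "(A1 - mat lam) ** R = mat 1" "R ** (A1 - mat lam) = mat 1"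
    and sylvester: "A1 ** S - S ** A2 = P1 ** P2"
  defines "F \<equiv> - Q0 - map_matrix ((*) lam) Q1" and "X \<equiv> P2 ** B ** P1"
    and "W \<equiv> mat 1 - P2 ** B ** R ** P1"
  shows "- ((- (Q1 ** P2 ** A2) - Q0 ** P2) ** B ** R ** P1 - P2 ** B ** (P1 ** Q1 ** P2) ** B ** R ** P1
           + P2 ** B ** R ** (A1 ** P1 ** Q1 + P1 ** Q0)) + W ** F
    = (F + Q1 ** X - X ** Q1) ** W"
proof -
  have SB': "Z ** S ** B = Z" "Z ** B ** S = Z" for Z :: "'a^'n^'n"
    using SB by (simp_all flip: matrix_mul_assoc)
  have "B ** A1 - A2 ** B = B ** (A1 ** S - S ** A2) ** B"
    using SB by (simp add: matrix_mul_ring_simps SB')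
  also have "\<dots> = B ** P1 ** P2 ** B" by (simp add: sylvester matrix_mul_assoc)
  finally have h: "B ** A1 - A2 ** B = B ** P1 ** P2 ** B" .
  have "A2 ** B = B ** A1 - (B ** A1 - A2 ** B)" by simp
  then have "A2 ** B = B ** A1 - B ** P1 ** P2 ** B" by (simp only: h)
  then have A2B: "Z ** A2 ** B = Z ** B ** A1 - Z ** B ** P1 ** P2 ** B" for Z :: "'a^'n^'k"
    by (simp add: matrix_mul_ring_simps flip: matrix_mul_assoc)
  have "R ** A1 - map_matrix ((*) lam) R = mat 1" "A1 ** R - map_matrix ((*) lam) R = mat 1"
    using R by (simp_all add: matrix_mul_ring_simps mat_mult_eq_map_matrix_scale mult_mat_eq_map_matrix_scale)
  then have "R ** A1 = mat 1 + map_matrix ((*) lam) R" "A1 ** R = mat 1 + map_matrix ((*) lam) R"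
    by (simp_all add: diff_eq_eq add.commute)
  then have RA1: "Z ** R ** A1 = Z + map_matrix ((*) lam) (Z ** R)"
    and A1R: "Z ** A1 ** R = Z + map_matrix ((*) lam) (Z ** R)" for Z :: "'a^'n^'k"
    by (simp_all add: matrix_mul_ring_simps flip: matrix_mul_assoc)
  show ?thesis
    unfolding F_def X_def W_def
    by (simp only: matrix_mul_ring_simps A2B RA1 A1R) (simp add: algebra_simps)
qed

lemma darboux_transform_ac_solution:
  fixes y :: "real \<Rightarrow> 'a::{real_algebra_1,comm_ring_1,euclidean_space}^'k"
    and F Q0 Q1 :: "real \<Rightarrow> 'a^'k^'k" and P1 :: "real \<Rightarrow> 'a^'k^'n" and P2 :: "real \<Rightarrow> 'a^'n^'k"
    and S :: "real \<Rightarrow> 'a^'n^'n" and A1 A2 :: "'a^'n^'n" and lam :: 'a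
  defines "X \<equiv> \<lambda>x. P2 x ** matrix_inv (S x) ** P1 x"
    and "W \<equiv> \<lambda>x. mat 1 - P2 x ** matrix_inv (S x) ** matrix_inv (A1 - mat lam) ** P1 x"
  assumes y: "ac_solution_on {a..b} y (\<lambda>x. F x *v y x)"
    and F: "\<And>x. F x = - Q0 x - map_matrix ((*) lam) (Q1 x)"
    and P1: "ac_solution_on {a..b} P1 (\<lambda>x. A1 ** P1 x ** Q1 x + P1 x ** Q0 x)"
    and P2: "ac_solution_on {a..b} P2 (\<lambda>x. - (Q1 x ** P2 x ** A2) - Q0 x ** P2 x)"
    and S: "ac_solution_on {a..b} S (\<lambda>x. P1 x ** Q1 x ** P2 x)"
    and sylvester: "A1 ** S a - S a ** A2 = P1 a ** P2 a"
    and S_inv: "\<And>x. x \<in> {a..b} \<Longrightarrow> invertible (S x)" and lam: "invertible (A1 - mat lam)"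
  shows "ac_solution_on {a..b} (\<lambda>x. W x *v y x) (\<lambda>x. (F x + Q1 x ** X x - X x ** Q1 x) *v (W x *v y x))"
proof -
  define R where "R = matrix_inv (A1 - mat lam)"
  define B where "B x = matrix_inv (S x)" for x
  define W' where "W' x = - ((- (Q1 x ** P2 x ** A2) - Q0 x ** P2 x) ** B x ** R ** P1 x
    - P2 x ** B x ** (P1 x ** Q1 x ** P2 x) ** B x ** R ** P1 x
    + P2 x ** B x ** R ** (A1 ** P1 x ** Q1 x + P1 x ** Q0 x))" for x
  have "ac_solution_on {a..b} W W'"
    unfolding W_def W'_def B_def R_def
    by (rule ac_solution_on_cong[OF ac_solution_on_diff[OF ac_solution_on_const
          ac_solution_on_bilinear[OF bilinear_matrix_mult ac_solution_on_bilinear[OF bilinear_matrix_mult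
            ac_solution_on_bilinear[OF bilinear_matrix_mult P2 ac_solution_on_matrix_inv[OF S S_inv]]
            ac_solution_on_const] P1]]])
      (simp_all add: matrix_mul_ring_simps)
  from ac_solution_on_bilinear[OF bilinear_matrix_vector_mult this y]
  show ?thesis
  proof (rule ac_solution_on_cong)
    fix x assume x: "x \<in> {a..b}"
    then have "A1 ** S x - S x ** A2 = P1 x ** P2 x"
      using sylvester_identity_propagates[of a x P1 A1 Q1 Q0 P2 A2 S] sylvester
        ac_solution_on_subset[OF P1] ac_solution_on_subset[OF P2] ac_solution_on_subset[OF S]
      by auto
    from darboux_gauge_identity[OF matrix_inv_right[OF S_inv[OF x]] matrix_inv_left[OF S_inv[OF x]]
        matrix_inv_right[OF lam] matrix_inv_left[OF lam] this, of "Q1 x" "Q0 x"]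
    have "W' x + W x ** F x = (F x + Q1 x ** X x - X x ** Q1 x) ** W x"
      by (simp add: W'_def W_def X_def B_def R_def F)
    then show "W' x *v y x + W x *v (F x *v y x) = (F x + Q1 x ** X x - X x ** Q1 x) *v (W x *v y x)"
      by (simp add: matrix_vector_mul_assoc flip: matrix_vector_mult_add_rdistrib)
  qed
qed

lemma mat2_split_lam:
  fixes r1 p q r2 w lam :: "'a::comm_ring_1"
  shows "mat2 r1 p (q - lam * w) r2 = - (- mat2 r1 p q r2) - map_matrix ((*) lam) (mat2 0 0 w 0)"
  by (simp add: vec_eq_iff forall_2 mat2_def)

lemma mat2_add_commutator:
  fixes X :: "'a::comm_ring_1^2^2"
  shows "mat2 r1 p q r2 + mat2 0 0 w 0 ** X - X ** mat2 0 0 w 0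
    = mat2 (r1 - w * X$1$2) p (q + w * (X$1$1 - X$2$2)) (r2 + w * X$1$2)"
  by (simp add: vec_eq_iff forall_2 mat2_def matrix_matrix_mult_def sum_2 algebra_simps)

theorem proposition4p1:
  fixes ell :: ereal
    and pinv q r1 r2 \<omega> :: "real \<Rightarrow> complex"
    and lam :: complex
    and y :: "real \<Rightarrow> complex^2"
    and A1 A2 :: "complex^'n^'n"
    and \<Pi>1 \<Pi>2 :: "real \<Rightarrow> complex^2^'n"
    and S :: "real \<Rightarrow> complex^'n^'n"
  defines "I \<equiv> {x::real. 0 \<le> x \<and> ereal x < ell}"
  defines "F \<equiv> (\<lambda>x. mat2 (r1 x) (pinv x) (q x - lam * \<omega> x) (r2 x))"
  defines "Q1 \<equiv> (\<lambda>x. mat2 0 0 (\<omega> x) 0)"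
  defines "Q0 \<equiv> (\<lambda>x. - mat2 (r1 x) (pinv x) (q x) (r2 x))"
  defines "X \<equiv> (\<lambda>x. mat_star (\<Pi>2 x) ** matrix_inv (S x) ** \<Pi>1 x)"
  defines "wA \<equiv> (\<lambda>x. mat 1 - mat_star (\<Pi>2 x) ** matrix_inv (S x) ** matrix_inv (A1 - mat lam) ** \<Pi>1 x)"
  assumes l_pos: "0 < ell"
    and summ: "locally_summable_on I pinv" "locally_summable_on I q" "locally_summable_on I r1"
              "locally_summable_on I r2" "locally_summable_on I \<omega>"
    and y_sol: "ac_solution_on I y (\<lambda>x. F x *v y x)"
    and init: "A1 ** S 0 - S 0 ** A2 = \<Pi>1 0 ** mat_star (\<Pi>2 0)"
    and Pi1_sol: "ac_solution_on I \<Pi>1 (\<lambda>x. A1 ** \<Pi>1 x ** Q1 x + \<Pi>1 x ** Q0 x)"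
    and Pi2_sol: "ac_solution_on I (\<lambda>x. mat_star (\<Pi>2 x))
                    (\<lambda>x. - (Q1 x ** mat_star (\<Pi>2 x) ** A2) - Q0 x ** mat_star (\<Pi>2 x))"
    and S_sol: "ac_solution_on I S (\<lambda>x. \<Pi>1 x ** Q1 x ** mat_star (\<Pi>2 x))"
    and lam_reg: "invertible (A1 - mat lam)"
  shows "\<forall>a b. a \<le> b \<longrightarrow> {a..b} \<subseteq> {x\<in>I. invertible (S x)} \<longrightarrow>
           ac_solution_on {a..b} (\<lambda>x. wA x *v y x)
             (\<lambda>x. mat2 (r1 x - \<omega> x * X x $ 1 $ 2) (pinv x)
                       (q x + \<omega> x * (X x $ 1 $ 1 - X x $ 2 $ 2) - lam * \<omega> x)
                       (r2 x + \<omega> x * X x $ 1 $ 2) *v (wA x *v y x))"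
proof (intro allI impI)
  fix a b :: real assume "a \<le> b" and sub: "{a..b} \<subseteq> {x\<in>I. invertible (S x)}"
  then have a: "0 \<le> a" and subI: "{a..b} \<subseteq> I" by (auto simp: I_def)
  have "ereal a < ell" using sub \<open>a \<le> b\<close> by (auto simp: I_def)
  then have sub0: "{0..a} \<subseteq> I" by (auto simp: I_def intro: le_less_trans[rotated])
  have sylvester: "A1 ** S a - S a ** A2 = \<Pi>1 a ** mat_star (\<Pi>2 a)"
    using sylvester_identity_propagates[OF ac_solution_on_subset[OF Pi1_sol sub0]
        ac_solution_on_subset[OF Pi2_sol sub0] ac_solution_on_subset[OF S_sol sub0] a init] .
  have F_split: "F x = - Q0 x - map_matrix ((*) lam) (Q1 x)" for x
    unfolding F_def Q0_def Q1_def by (rule mat2_split_lam)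
  have S_inv: "invertible (S x)" if "x \<in> {a..b}" for x using sub that by auto
  have transformed: "ac_solution_on {a..b} (\<lambda>x. wA x *v y x)
      (\<lambda>x. (F x + Q1 x ** X x - X x ** Q1 x) *v (wA x *v y x))"
    unfolding wA_def X_def
    using darboux_transform_ac_solution[OF ac_solution_on_subset[OF y_sol subI] F_split
        ac_solution_on_subset[OF Pi1_sol subI] ac_solution_on_subset[OF Pi2_sol subI]
        ac_solution_on_subset[OF S_sol subI] sylvester S_inv lam_reg] .
  have F_transformed: "F x + Q1 x ** X x - X x ** Q1 x = mat2 (r1 x - \<omega> x * X x $ 1 $ 2) (pinv x)
      (q x + \<omega> x * (X x $ 1 $ 1 - X x $ 2 $ 2) - lam * \<omega> x) (r2 x + \<omega> x * X x $ 1 $ 2)" for x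
    unfolding F_def Q1_def mat2_add_commutator by (simp add: algebra_simps)
  show "ac_solution_on {a..b} (\<lambda>x. wA x *v y x)
             (\<lambda>x. mat2 (r1 x - \<omega> x * X x $ 1 $ 2) (pinv x)
                       (q x + \<omega> x * (X x $ 1 $ 1 - X x $ 2 $ 2) - lam * \<omega> x)
                       (r2 x + \<omega> x * X x $ 1 $ 2) *v (wA x *v y x))"
    by (rule ac_solution_on_cong[OF transformed]) (simp add: F_transformed)
qed

end
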